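(* Let $\mathcal I=(\Omega,\mathbb P,\mathcal S,\mathcal T,Y)$ be an information structure satisfying rectangle substitutes, and let $\epsilon>0$. Consider the protocol in which Alice sends $\mu_\sigma$ rounded to the nearest multiple of $\epsilon$ and Bob sends $\mu_\tau$ rounded to the nearest multiple of $\epsilon$ (each message depending only on the sender's own signal), after which the protocol terminates. This protocol uses $O(\log(1/\epsilon))$ bits of communication, and at its end Alice and Bob $2\epsilon^2$-agree and are each $\epsilon^2$-accurate.
   Context: An information structure is a tuple $\mathcal I=(\Omega,\mathbb P,\mathcal S,\mathcal T,Y)$: a probability space, random variables $\sigma:\Omega\to\mathcal S$ (Alice's signal), $\tau:\Omega\to\mathcal T$ (Bob's signal), $Y:\Omega\to[0,1]$. Notation: $\mu_{\sigma\tau}=\mathbb E[Y\mid\sigma,\tau]$, $\mu_\sigma=\mathbb E[Y\mid\sigma]$, $\mu_\tau=\mathbb E[Y\mid\tau]$; for measurable $S,T$: $\mu_{\sigma T}=\mathbb E[Y\mid\sigma,\tau\in T]$, $\mu_{S\tau}=\mathbb E[Y\mid\sigma\in S,\tau]$, $\mu_{ST}=\mathbb E[Y\mid\sigma\in S,\tau\in T]$; $\mathbb E[\cdot\mid S,T]$ conditions on $\{\sigma\in S,\tau\in T\}$. In a communication protocol, at termination the set of signal pairs consistent with the transcript is a rectangle $S\times T$; Alice's final expectation is $a=\mu_{\sigma T}$ and Bob's is $b=\mu_{S\tau}$. They $\epsilon$-agree if $\frac14\mathbb E[(a-b)^2]\le\epsilon$. Alice is $\epsilon$-accurate if $\mathbb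 E[(\mu_{\sigma\tau}-a)^2]\le\epsilon$; likewise Bob with $b$. $\mathcal I$ satisfies rectangle substitutes if for all measurable $S\subseteq\mathcal S$, $T\subseteq\mathcal T$ with $\mathbb P(\sigma\in S,\tau\in T)>0$: $\mathbb E[(Y-\mu_{S\tau})^2\mid S,T]-\mathbb E[(Y-\mu_{\sigma\tau})^2\mid S,T]\le \mathbb E[(Y-\mu_{ST})^2\mid S,T]-\mathbb E[(Y-\mu_{\sigma T})^2\mid S,T]$. *)

theory Defs
  imports "HOL-Probability.Probability"
begin

definition gen1 :: "'w measure \<Rightarrow> ('w \<Rightarrow> 'a) \<Rightarrow> 'a measure \<Rightarrow> 'w measure" where
  "gen1 M f A = vimage_algebra (space M) f A"

definition gen2 :: "'w measure \<Rightarrow> ('w \<Rightarrow> 'a) \<Rightarrow> 'a measure \<Rightarrow> ('w \<Rightarrow> 'b) \<Rightarrow> 'b measure \<Rightarrow> 'w measure" where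
  "gen2 M f A g B = vimage_algebra (space M) (\<lambda>w. (f w, g w)) (A \<Otimes>\<^sub>M B)"

definition condE :: "'w measure \<Rightarrow> 'w set \<Rightarrow> ('w \<Rightarrow> real) \<Rightarrow> real" where
  "condE M E f = (\<integral>w. indicator E w * f w \<partial>M) / measure M E"

definition info_structure ::
  "'w measure \<Rightarrow> 's measure \<Rightarrow> 't measure \<Rightarrow> ('w \<Rightarrow> 's) \<Rightarrow> ('w \<Rightarrow> 't) \<Rightarrow> ('w \<Rightarrow> real) \<Rightarrow> bool" where
  "info_structure M SS TT sig tau Y \<longleftrightarrow>
     prob_space M \<and> sig \<in> M \<rightarrow>\<^sub>M SS \<and> tau \<in> M \<rightarrow>\<^sub>M TT \<and> Y \<in> borel_measurable M \<and>
     (\<forall>w\<in>space M. 0 \<le> Y w \<and> Y w \<le> 1)"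

definition mu_st where
  "mu_st M SS TT sig tau Y = real_cond_exp M (gen2 M sig SS tau TT) Y"

definition mu_s where
  "mu_s M SS sig Y = real_cond_exp M (gen1 M sig SS) Y"

definition mu_t where
  "mu_t M TT tau Y = real_cond_exp M (gen1 M tau TT) Y"

text \<open>For measurable S, T: mu_{sigma T} = E[Y | sigma, 1(tau in T)], which on the event
  {tau in T} is E[Y | sigma, tau in T]; similarly mu_{S tau}; mu_{ST} = E[Y | sigma in S, tau in T].\<close>
definition mu_sT where
  "mu_sT M SS sig tau Y T =
     real_cond_exp M (gen2 M sig SS (\<lambda>w. tau w \<in> T) (count_space UNIV)) Y"

definition mu_St where
  "mu_St M TT sig tau Y S =
     real_cond_exp M (gen2 M (\<lambda>w. sig w \<in> S) (count_space UNIV) tau TT) Y"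

definition rect_event where
  "rect_event M sig tau S T = {w \<in> space M. sig w \<in> S \<and> tau w \<in> T}"

definition mu_ST where
  "mu_ST M sig tau Y S T = condE M (rect_event M sig tau S T) Y"

definition rectangle_substitutes ::
  "'w measure \<Rightarrow> 's measure \<Rightarrow> 't measure \<Rightarrow> ('w \<Rightarrow> 's) \<Rightarrow> ('w \<Rightarrow> 't) \<Rightarrow> ('w \<Rightarrow> real) \<Rightarrow> bool" where
  "rectangle_substitutes M SS TT sig tau Y \<longleftrightarrow>
     (\<forall>S \<in> sets SS. \<forall>T \<in> sets TT.
        measure M (rect_event M sig tau S T) > 0 \<longrightarrow>
          (let E = rect_event M sig tau S T in
             condE M E (\<lambda>w. (Y w - mu_St M TT sig tau Y S w)\<^sup>2)
             - condE M E (\<lambda>w. (Y w - mu_st M SS TT sig tau Y w)\<^sup>2)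
           \<le> condE M E (\<lambda>w. (Y w - mu_ST M sig tau Y S T)\<^sup>2)
             - condE M E (\<lambda>w. (Y w - mu_sT M SS sig tau Y T w)\<^sup>2)))"

text \<open>The protocol: Alice sends mu_sigma rounded to the nearest multiple of eps,
  Bob sends mu_tau rounded likewise (each a function of the sender's own signal,
  being measurable w.r.t. the sender's sigma algebra); then it terminates.\<close>
definition round_to :: "real \<Rightarrow> real \<Rightarrow> real" where
  "round_to eps x = eps * of_int (round (x / eps))"

definition msgA where
  "msgA M SS sig Y eps = (\<lambda>w. round_to eps (mu_s M SS sig Y w))"

definition msgB where
  "msgB M TT tau Y eps = (\<lambda>w. round_to eps (mu_t M TT tau Y w))"

text \<open>Final expectations: Alice's a = mu_{sigma T} where T is the set of Bob's signals
  consistent with Bob's message, i.e. a = E[Y | sigma, Bob's message]; symmetrically b.\<close>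
definition final_a where
  "final_a M SS TT sig tau Y eps =
     real_cond_exp M (gen2 M sig SS (msgB M TT tau Y eps) borel) Y"

definition final_b where
  "final_b M SS TT sig tau Y eps =
     real_cond_exp M (gen2 M (msgA M SS sig Y eps) borel tau TT) Y"

end

theory Submission
  imports Defs
begin

(* Fix a cell E = {tau \<in> T} of Bob's rounded report m. Rectangle substitutes with S the whole
   signal space bounds the gain E[(Y - mu_tau)^2 - (Y - mu_sigmatau)^2 | E] by
   E[(Y - mu_ST)^2 - (Y - mu_sigmaT)^2 | E]; on E the constant mu_ST is no better than the constant m,
   and mu_sigmaT is measurable for Alice's final information, hence no better than her final
   expectation a. Summing over the cells gives
   E(Y - mu_tau)^2 - E(Y - mu_sigmatau)^2 <= E(Y - m)^2 - E(Y - a)^2, which Pythagoras for conditional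
   expectations turns into E(mu_sigmatau - a)^2 <= E(mu_tau - m)^2 <= eps^2/4. Bob's bound is the same
   statement with the roles of sigma and tau exchanged, agreement follows from
   (a - b)^2 <= 2 (mu_sigmatau - a)^2 + 2 (mu_sigmatau - b)^2, and both messages lie on a grid of at
   most 1/eps + 2 multiples of eps. *)

section \<open>Rounded reports\<close>

lemma measurable_round_to [measurable]: "(\<lambda>x. round_to eps x) \<in> borel_measurable borel"
  unfolding round_to_def round_def by measurable

lemma abs_diff_round_to_le:
  assumes "eps > 0"
  shows "\<bar>x - round_to eps x\<bar> \<le> eps / 2"
proof -
  have "x - round_to eps x = eps * (x / eps - of_int (round (x / eps)))"
    using assms by (simp add: round_to_def field_simps)
  then have "\<bar>x - round_to eps x\<bar> = eps * \<bar>of_int (round (x / eps)) - x / eps\<bar>"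
    using assms by (simp add: abs_mult abs_minus_commute)
  also have "\<dots> \<le> eps * (1 / 2)"
    using assms of_int_round_abs_le[of "x / eps"] by (intro mult_left_mono) auto
  finally show ?thesis
    by simp
qed

definition report_grid :: "real \<Rightarrow> real set" where
  "report_grid eps = (\<lambda>k. eps * of_int k) ` {0..round (1 / eps)}"

lemma finite_report_grid [simp]: "finite (report_grid eps)"
  by (simp add: report_grid_def)

lemma round_to_in_report_grid:
  assumes "eps > 0" "0 \<le> x" "x \<le> 1"
  shows "round_to eps x \<in> report_grid eps"
proof -
  have "0 \<le> round (x / eps)"
    using round_mono[of 0 "x / eps"] assms by simp
  moreover have "round (x / eps) \<le> round (1 / eps)"
    using assms by (intro round_mono divide_right_mono) auto
  ultimately show ?thesis
    unfolding round_to_def report_grid_def by auto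
qed

lemma card_report_grid:
  assumes "eps > 0"
  shows "1 \<le> card (report_grid eps)" "real (card (report_grid eps)) \<le> 1 / eps + 2"
proof -
  have round_nonneg: "0 \<le> round (1 / eps)"
    using round_mono[of 0 "1 / eps"] assms by simp
  then have "0 \<in> report_grid eps"
    unfolding report_grid_def by force
  then show "1 \<le> card (report_grid eps)"
    by (auto simp: Suc_le_eq card_gt_0_iff)
  have "card (report_grid eps) \<le> card {0..round (1 / eps)}"
    unfolding report_grid_def by (rule card_image_le) simp
  also have "\<dots> = nat (round (1 / eps) + 1)"
    by simp
  finally show "real (card (report_grid eps)) \<le> 1 / eps + 2"
    using round_nonneg of_int_round_le[of "1 / eps"] by linarith
qed

lemma ceiling_log_card_report_grid:
  assumes "eps > 0"
  shows "real_of_int \<lceil>log 2 (real (card (report_grid eps)))\<rceil> \<le> log 2 (1 / eps + 2) + 1"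
proof -
  have "log 2 (real (card (report_grid eps))) \<le> log 2 (1 / eps + 2)"
    using card_report_grid[OF assms] by (subst log_le_cancel_iff) auto
  then show ?thesis
    by linarith
qed

section \<open>Generated \<sigma>-algebras\<close>

lemma subalgebra_vimage_algebra:
  assumes "f \<in> F \<rightarrow>\<^sub>M N" "space F = X"
  shows "subalgebra F (vimage_algebra X f N)"
  unfolding subalgebra_def using sets_image_in_sets[OF assms(2,1)] assms(2) by simp

lemma subalgebra_trans: "subalgebra M F \<Longrightarrow> subalgebra F G \<Longrightarrow> subalgebra M G"
  unfolding subalgebra_def by auto

lemma subalgebra_gen1:
  assumes "f \<in> F \<rightarrow>\<^sub>M A" "space F = space M"
  shows "subalgebra F (gen1 M f A)"
  unfolding gen1_def using assms by (rule subalgebra_vimage_algebra)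

lemma subalgebra_gen2:
  assumes "f \<in> F \<rightarrow>\<^sub>M A" "g \<in> F \<rightarrow>\<^sub>M B" "space F = space M"
  shows "subalgebra F (gen2 M f A g B)"
  unfolding gen2_def using assms(1,2) by (intro subalgebra_vimage_algebra assms(3)) measurable

lemma measurable_gen1:
  assumes "f \<in> space M \<rightarrow> space A"
  shows "f \<in> gen1 M f A \<rightarrow>\<^sub>M A"
  unfolding gen1_def using assms by (rule measurable_vimage_algebra1)

lemma measurable_gen2:
  assumes "f \<in> space M \<rightarrow> space A" "g \<in> space M \<rightarrow> space B"
  shows "f \<in> gen2 M f A g B \<rightarrow>\<^sub>M A" "g \<in> gen2 M f A g B \<rightarrow>\<^sub>M B"
proof -
  have "(\<lambda>w. (f w, g w)) \<in> gen2 M f A g B \<rightarrow>\<^sub>M A \<Otimes>\<^sub>M B"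
    unfolding gen2_def using assms by (intro measurable_vimage_algebra1) (auto simp: space_pair_measure)
  from measurable_fst'[OF this] measurable_snd'[OF this]
  show "f \<in> gen2 M f A g B \<rightarrow>\<^sub>M A" "g \<in> gen2 M f A g B \<rightarrow>\<^sub>M B"
    by simp_all
qed

lemma gen2_cong:
  assumes "\<And>w. w \<in> space M \<Longrightarrow> f w = f' w" "\<And>w. w \<in> space M \<Longrightarrow> g w = g' w"
  shows "gen2 M f A g B = gen2 M f' A g' B"
  unfolding gen2_def using assms by (intro vimage_algebra_cong) auto

lemma subalgebra_gen2_whole_space:
  assumes "f \<in> space M \<rightarrow> space A" "g \<in> space M \<rightarrow> space B"
  shows "subalgebra (gen1 M g B) (gen2 M (\<lambda>w. f w \<in> space A) (count_space UNIV) g B)"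
proof -
  have "gen2 M (\<lambda>w. f w \<in> space A) (count_space UNIV) g B = gen2 M (\<lambda>_. True) (count_space UNIV) g B"
    using assms(1) by (intro gen2_cong) auto
  moreover have "subalgebra (gen1 M g B) (gen2 M (\<lambda>_. True) (count_space UNIV) g B)"
    using measurable_gen1[OF assms(2)] by (intro subalgebra_gen2) (simp_all add: gen1_def)
  ultimately show ?thesis
    by simp
qed

lemma subalgebra_gen2_level_set:
  fixes m :: "'a \<Rightarrow> real"
  assumes "f \<in> G \<rightarrow>\<^sub>M A" and m [measurable]: "m \<in> borel_measurable G" and "space G = space M"
    and level_set: "{w \<in> space M. m w = r} = g -` T \<inter> space M"
  shows "subalgebra G (gen2 M f A (\<lambda>w. g w \<in> T) (count_space UNIV))"
proof -
  have "gen2 M f A (\<lambda>w. g w \<in> T) (count_space UNIV) = gen2 M f A (\<lambda>w. m w = r) (count_space UNIV)"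
    using level_set by (intro gen2_cong) blast+
  moreover have "(\<lambda>w. m w = r) \<in> G \<rightarrow>\<^sub>M count_space UNIV"
    by measurable
  ultimately show ?thesis
    using assms(1,3) by (simp add: subalgebra_gen2)
qed

lemma sets_gen2_swap_subset:
  assumes "f \<in> space M \<rightarrow> space A" "g \<in> space M \<rightarrow> space B"
  shows "sets (gen2 M g B f A) \<subseteq> sets (gen2 M f A g B)"
proof
  have pair_space: "(\<lambda>w. (f w, g w)) \<in> space M \<rightarrow> space (A \<Otimes>\<^sub>M B)"
    "(\<lambda>w. (g w, f w)) \<in> space M \<rightarrow> space (B \<Otimes>\<^sub>M A)"
    using assms by (auto simp: space_pair_measure)
  fix E assume "E \<in> sets (gen2 M g B f A)"
  then obtain Z where Z: "Z \<in> sets (B \<Otimes>\<^sub>M A)" and E: "E = (\<lambda>w. (g w, f w)) -` Z \<inter> space M"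
    unfolding gen2_def sets_vimage_algebra2[OF pair_space(2)] by blast
  let ?X = "(\<lambda>(x, y). (y, x)) -` Z \<inter> space (A \<Otimes>\<^sub>M B)"
  have "?X \<in> sets (A \<Otimes>\<^sub>M B)"
    using measurable_sets[OF measurable_pair_swap' Z] .
  moreover have "E = (\<lambda>w. (f w, g w)) -` ?X \<inter> space M"
    using E pair_space(1) by auto
  ultimately show "E \<in> sets (gen2 M f A g B)"
    unfolding gen2_def sets_vimage_algebra2[OF pair_space(1)] by blast
qed

lemma gen2_swap:
  assumes "f \<in> space M \<rightarrow> space A" "g \<in> space M \<rightarrow> space B"
  shows "gen2 M g B f A = gen2 M f A g B"
proof (rule measure_eqI)
  show "sets (gen2 M g B f A) = sets (gen2 M f A g B)"
    using sets_gen2_swap_subset[OF assms] sets_gen2_swap_subset[OF assms(2,1)] by blast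
qed (simp add: gen2_def vimage_algebra_def emeasure_sigma)

lemma level_set_gen1:
  fixes m :: "'a \<Rightarrow> real"
  assumes "m \<in> borel_measurable (gen1 M f A)" "f \<in> space M \<rightarrow> space A"
  shows "\<exists>T \<in> sets A. {w \<in> space M. m w = r} = f -` T \<inter> space M"
proof -
  have "{w \<in> space (gen1 M f A). m w = r} \<in> sets (gen1 M f A)"
    using assms(1) by measurable
  then show ?thesis
    unfolding gen1_def sets_vimage_algebra2[OF assms(2)] by auto
qed

section \<open>Squared errors and conditional expectations\<close>

lemma integrable_indicator_mult:
  fixes f :: "'a \<Rightarrow> real"
  assumes "E \<in> sets M" "integrable M f"
  shows "integrable M (\<lambda>w. indicator E w * f w)"
  using integrable_mult_indicator[OF assms] by simp

context prob_space
begin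

lemma sigma_finite_subalgebra_of_subalgebra:
  assumes "subalgebra M F"
  shows "sigma_finite_subalgebra M F"
  by (rule finite_measure_subalgebra_is_sigma_finite) (unfold_locales, fact assms)

lemma integrable_sq_diff_bounded:
  fixes f g :: "'a \<Rightarrow> real"
  assumes [measurable]: "f \<in> borel_measurable M" "g \<in> borel_measurable M"
    and "AE w in M. \<bar>f w\<bar> \<le> C" "AE w in M. \<bar>g w\<bar> \<le> D"
  shows "integrable M (\<lambda>w. (f w - g w)\<^sup>2)"
proof (rule integrable_const_bound[where B = "(C + D)\<^sup>2"])
  show "AE w in M. norm ((f w - g w)\<^sup>2) \<le> (C + D)\<^sup>2"
    using assms(3,4)
  proof eventually_elim
    case (elim w)
    then have "\<bar>f w - g w\<bar> \<le> C + D"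
      by linarith
    then show ?case
      by (simp add: abs_le_square_iff[symmetric])
  qed
qed measurable

lemma integral_sq_le_of_abs_le:
  fixes f :: "'a \<Rightarrow> real"
  assumes [measurable]: "f \<in> borel_measurable M" and bound: "\<And>w. w \<in> space M \<Longrightarrow> \<bar>f w\<bar> \<le> e"
  shows "(\<integral>w. (f w)\<^sup>2 \<partial>M) \<le> e\<^sup>2"
proof -
  have "(\<integral>w. (f w)\<^sup>2 \<partial>M) \<le> (\<integral>w. e\<^sup>2 \<partial>M)"
    using bound
    by (intro integral_mono') (auto intro: order_trans[OF _ abs_ge_self] simp: abs_le_square_iff[symmetric])
  then show ?thesis
    by (simp add: prob_space)
qed

lemma integral_sq_diff_le_two_sum:
  fixes a b \<mu> :: "'a \<Rightarrow> real"
  assumes [measurable]: "a \<in> borel_measurable M" "b \<in> borel_measurable M" "\<mu> \<in> borel_measurable M"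
    and "AE w in M. \<bar>a w\<bar> \<le> 1" "AE w in M. \<bar>b w\<bar> \<le> 1" "AE w in M. \<bar>\<mu> w\<bar> \<le> 1"
  shows "(\<integral>w. (a w - b w)\<^sup>2 \<partial>M) \<le> 2 * (\<integral>w. (\<mu> w - a w)\<^sup>2 \<partial>M) + 2 * (\<integral>w. (\<mu> w - b w)\<^sup>2 \<partial>M)"
proof -
  have "(\<integral>w. (a w - b w)\<^sup>2 \<partial>M) \<le> (\<integral>w. 2 * (\<mu> w - a w)\<^sup>2 + 2 * (\<mu> w - b w)\<^sup>2 \<partial>M)"
  proof (rule integral_mono')
    show "integrable M (\<lambda>w. 2 * (\<mu> w - a w)\<^sup>2 + 2 * (\<mu> w - b w)\<^sup>2)"
      using integrable_sq_diff_bounded[of \<mu> a] integrable_sq_diff_bounded[of \<mu> b] assms by auto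
    show "(a w - b w)\<^sup>2 \<le> 2 * (\<mu> w - a w)\<^sup>2 + 2 * (\<mu> w - b w)\<^sup>2" for w
      using sum_squares_ge_zero[of "2 * \<mu> w - a w - b w" 0]
      by (simp add: power2_eq_square algebra_simps)
  qed simp
  also have "\<dots> = 2 * (\<integral>w. (\<mu> w - a w)\<^sup>2 \<partial>M) + 2 * (\<integral>w. (\<mu> w - b w)\<^sup>2 \<partial>M)"
    using integrable_sq_diff_bounded[of \<mu> a] integrable_sq_diff_bounded[of \<mu> b] assms by simp
  finally show ?thesis .
qed

lemma integral_eq_sum_level_sets:
  fixes f m :: "'a \<Rightarrow> real"
  assumes R: "finite R" "AE w in M. m w \<in> R"
    and [measurable]: "m \<in> borel_measurable M" and f: "integrable M f"
  shows "(\<integral>w. f w \<partial>M) = (\<Sum>r\<in>R. \<integral>w. indicator {w \<in> space M. m w = r} w * f w \<partial>M)"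
proof -
  have "(\<integral>w. f w \<partial>M) = (\<integral>w. (\<Sum>r\<in>R. indicator {w \<in> space M. m w = r} w * f w) \<partial>M)"
  proof (rule integral_cong_AE)
    show "AE w in M. f w = (\<Sum>r\<in>R. indicator {w \<in> space M. m w = r} w * f w)"
      using R(2) AE_space
    proof eventually_elim
      case (elim w)
      then have "(\<Sum>r\<in>R. indicator {w \<in> space M. m w = r} w * f w) = (\<Sum>r\<in>R. if r = m w then f w else 0)"
        by (intro sum.cong) (auto simp: indicator_def)
      then show ?case
        using elim R(1) by simp
    qed
  qed (use f in auto)
  also have "\<dots> = (\<Sum>r\<in>R. \<integral>w. indicator {w \<in> space M. m w = r} w * f w \<partial>M)"
    using f by (intro Bochner_Integration.integral_sum integrable_indicator_mult) auto
  finally show ?thesis .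
qed

lemma integral_indicator_null:
  fixes f :: "'a \<Rightarrow> real"
  assumes "E \<in> sets M" "measure M E = 0"
  shows "(\<integral>w. indicator E w * f w \<partial>M) = 0"
proof -
  have "E \<in> null_sets M"
    using assms by (simp add: emeasure_eq_measure null_sets_def)
  then have "AE w in M. indicator E w * f w = 0"
    by (rule AE_mp[OF AE_not_in]) (auto simp: indicator_def)
  then show ?thesis
    by (rule integral_eq_zero_AE)
qed

end

locale unit_observable = prob_space M for M :: "'a measure" +
  fixes Y :: "'a \<Rightarrow> real"
  assumes Y_measurable [measurable]: "Y \<in> borel_measurable M"
    and Y_unit: "\<And>w. w \<in> space M \<Longrightarrow> 0 \<le> Y w \<and> Y w \<le> 1"
begin

lemma abs_Y_le_1: "AE w in M. \<bar>Y w\<bar> \<le> 1"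
  using Y_unit by (intro AE_I2) force

lemma integrable_Y: "integrable M Y"
  using abs_Y_le_1 by (intro integrable_const_bound) auto

lemma real_cond_exp_unit:
  assumes "subalgebra M F"
  shows "AE w in M. 0 \<le> real_cond_exp M F Y w \<and> real_cond_exp M F Y w \<le> 1"
proof -
  interpret sigma_finite_subalgebra M F
    using assms by (rule sigma_finite_subalgebra_of_subalgebra)
  have "AE w in M. 0 \<le> real_cond_exp M F Y w"
    using Y_unit by (intro real_cond_exp_ge_c integrable_Y AE_I2) auto
  moreover have "AE w in M. real_cond_exp M F Y w \<le> 1"
    using Y_unit by (intro real_cond_exp_le_c integrable_Y AE_I2) auto
  ultimately show ?thesis
    by eventually_elim simp
qed

lemma abs_real_cond_exp_le_1:
  assumes "subalgebra M F"
  shows "AE w in M. \<bar>real_cond_exp M F Y w\<bar> \<le> 1"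
  using real_cond_exp_unit[OF assms] by eventually_elim auto

lemma integral_indicator_sq_dist_real_cond_exp:
  fixes g :: "'a \<Rightarrow> real"
  assumes F: "subalgebra M F" and g: "g \<in> borel_measurable F" "AE w in M. \<bar>g w\<bar> \<le> C"
    and E: "E \<in> sets F"
  shows "(\<integral>w. indicator E w * (Y w - g w)\<^sup>2 \<partial>M)
      = (\<integral>w. indicator E w * (Y w - real_cond_exp M F Y w)\<^sup>2 \<partial>M)
        + (\<integral>w. indicator E w * (real_cond_exp M F Y w - g w)\<^sup>2 \<partial>M)"
proof -
  interpret sigma_finite_subalgebra M F
    using F by (rule sigma_finite_subalgebra_of_subalgebra)
  define c where "c = real_cond_exp M F Y"
  define h where "h w = indicator E w * (c w - g w)" for w
  have [measurable]: "g \<in> borel_measurable M" "E \<in> sets M" "c \<in> borel_measurable M"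
    using measurable_from_subalg[OF F g(1)] E F by (auto simp: subalgebra_def c_def)
  have h_F: "h \<in> borel_measurable F"
    unfolding h_def c_def using g(1) E by measurable
  have c_bound: "AE w in M. \<bar>c w\<bar> \<le> 1"
    unfolding c_def using F by (rule abs_real_cond_exp_le_1)
  have bounds: "AE w in M. \<bar>Y w\<bar> \<le> 1 \<and> \<bar>c w\<bar> \<le> 1 \<and> \<bar>g w\<bar> \<le> C"
    using abs_Y_le_1 c_bound g(2) by eventually_elim simp
  have int_h: "integrable M (\<lambda>w. h w * f w)" if [measurable]: "f \<in> borel_measurable M"
    and f: "AE w in M. \<bar>f w\<bar> \<le> 1" for f
  proof (rule integrable_const_bound[where B = "1 + C"])
    show "AE w in M. norm (h w * f w) \<le> 1 + C"
      using bounds f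
    proof eventually_elim
      case (elim w)
      have "\<bar>h w\<bar> \<le> 1 + C"
        using elim by (auto simp: h_def indicator_def)
      then show ?case
        using elim mult_mono[of "\<bar>h w\<bar>" "1 + C" "\<bar>f w\<bar>" 1] by (simp add: abs_mult)
    qed
  qed (simp add: h_def)
  have int_sq: "integrable M (\<lambda>w. indicator E w * (Y w - c w)\<^sup>2)"
    "integrable M (\<lambda>w. indicator E w * (c w - g w)\<^sup>2)"
    using integrable_sq_diff_bounded[OF _ _ abs_Y_le_1 c_bound] integrable_sq_diff_bounded[OF _ _ c_bound g(2)]
    by (auto intro!: integrable_indicator_mult)
  have orthogonal: "(\<integral>w. h w * c w \<partial>M) = (\<integral>w. h w * Y w \<partial>M)"
    unfolding c_def using int_h[OF Y_measurable abs_Y_le_1] h_F by (rule real_cond_exp_intg(2)) simp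
  have "\<And>w. indicator E w * (Y w - g w)\<^sup>2
      = indicator E w * (Y w - c w)\<^sup>2 + 2 * (h w * Y w - h w * c w) + indicator E w * (c w - g w)\<^sup>2"
    by (simp add: h_def indicator_def power2_eq_square algebra_simps)
  then have "(\<integral>w. indicator E w * (Y w - g w)\<^sup>2 \<partial>M)
      = (\<integral>w. indicator E w * (Y w - c w)\<^sup>2 \<partial>M) + 2 * ((\<integral>w. h w * Y w \<partial>M) - (\<integral>w. h w * c w \<partial>M))
        + (\<integral>w. indicator E w * (c w - g w)\<^sup>2 \<partial>M)"
    using int_sq int_h[OF Y_measurable abs_Y_le_1] int_h[OF _ c_bound] by simp
  with orthogonal show ?thesis
    by (simp add: c_def)
qed

lemma integral_sq_dist_real_cond_exp:
  fixes g :: "'a \<Rightarrow> real"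
  assumes F: "subalgebra M F" and g: "g \<in> borel_measurable F" "AE w in M. \<bar>g w\<bar> \<le> C"
  shows "(\<integral>w. (Y w - g w)\<^sup>2 \<partial>M)
      = (\<integral>w. (Y w - real_cond_exp M F Y w)\<^sup>2 \<partial>M) + (\<integral>w. (real_cond_exp M F Y w - g w)\<^sup>2 \<partial>M)"
proof -
  have space: "space M \<in> sets F"
    using F sets.top[of F] by (simp add: subalgebra_def)
  have indicator_space: "(\<integral>w. indicator (space M) w * f w \<partial>M) = (\<integral>w. f w \<partial>M)" for f :: "'a \<Rightarrow> real"
    by (rule Bochner_Integration.integral_cong) auto
  show ?thesis
    using integral_indicator_sq_dist_real_cond_exp[OF F g space] by (simp only: indicator_space)
qed

lemma integral_indicator_sq_dev_condE_le:
  assumes E: "E \<in> sets M" "measure M E > 0"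
  shows "(\<integral>w. indicator E w * (Y w - condE M E Y)\<^sup>2 \<partial>M) \<le> (\<integral>w. indicator E w * (Y w - c)\<^sup>2 \<partial>M)"
proof -
  define d where "d = condE M E Y"
  have mean: "(\<integral>w. indicator E w * Y w \<partial>M) = d * measure M E"
    using E(2) by (simp add: d_def condE_def)
  have expand: "indicator E w * (Y w - c)\<^sup>2 = indicator E w * (Y w - d)\<^sup>2
      + 2 * (d - c) * (indicator E w * Y w) - (2 * (d - c) * d - (d - c)\<^sup>2) * indicator E w" for w
    by (cases "w \<in> E") (simp_all add: power2_eq_square algebra_simps)
  have "integrable M (\<lambda>w. indicator E w * (Y w - d)\<^sup>2)"
    using E(1) integrable_sq_diff_bounded[OF _ _ abs_Y_le_1, of "\<lambda>_. d" "\<bar>d\<bar>"]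
    by (auto intro: integrable_indicator_mult)
  moreover have indicator_integrable: "integrable M (indicator E :: 'a \<Rightarrow> real)"
    using E(1) by (intro integrable_real_indicator) (simp_all add: less_top[symmetric])
  ultimately have "(\<integral>w. indicator E w * (Y w - c)\<^sup>2 \<partial>M)
      = (\<integral>w. indicator E w * (Y w - d)\<^sup>2 \<partial>M) + 2 * (d - c) * (d * measure M E)
        - (2 * (d - c) * d - (d - c)\<^sup>2) * measure M E"
    using E(1) integrable_indicator_mult[OF E(1) integrable_Y] indicator_integrable
    unfolding expand mean[symmetric] by simp
  also have "\<dots> = (\<integral>w. indicator E w * (Y w - d)\<^sup>2 \<partial>M) + (d - c)\<^sup>2 * measure M E"
    by (simp add: algebra_simps)
  finally show ?thesis
    using E(2) unfolding d_def by simp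
qed

lemma round_to_real_cond_exp_in_report_grid:
  assumes "subalgebra M F" "eps > 0"
  shows "AE w in M. round_to eps (real_cond_exp M F Y w) \<in> report_grid eps"
  using real_cond_exp_unit[OF assms(1)] by eventually_elim (auto intro: round_to_in_report_grid assms(2))

lemma integral_indicator_error_reduction_le:
  fixes e1 e2 m \<nu> :: "'a \<Rightarrow> real"
  assumes G: "subalgebra M G" and E: "E \<in> sets G" and m: "\<And>w. w \<in> E \<Longrightarrow> m w = r"
    and \<nu>: "\<nu> \<in> borel_measurable G" "AE w in M. \<bar>\<nu> w\<bar> \<le> 1"
    and substitutes: "measure M E > 0 \<Longrightarrow> condE M E e1 - condE M E e2
      \<le> condE M E (\<lambda>w. (Y w - condE M E Y)\<^sup>2) - condE M E (\<lambda>w. (Y w - \<nu> w)\<^sup>2)"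
  shows "(\<integral>w. indicator E w * e1 w \<partial>M) - (\<integral>w. indicator E w * e2 w \<partial>M)
    \<le> (\<integral>w. indicator E w * (Y w - m w)\<^sup>2 \<partial>M) - (\<integral>w. indicator E w * (Y w - real_cond_exp M G Y w)\<^sup>2 \<partial>M)"
proof -
  define I where "I f = (\<integral>w. indicator E w * f w \<partial>M)" for f :: "'a \<Rightarrow> real"
  have E_M: "E \<in> sets M"
    using E G by (auto simp: subalgebra_def)
  show ?thesis
  proof (cases "measure M E = 0")
    case True
    then show ?thesis
      by (simp add: integral_indicator_null[OF E_M])
  next
    case False
    then have pos: "measure M E > 0"
      using measure_nonneg[of M E] by linarith
    have "I e1 / measure M E - I e2 / measure M E
        \<le> I (\<lambda>w. (Y w - condE M E Y)\<^sup>2) / measure M E - I (\<lambda>w. (Y w - \<nu> w)\<^sup>2) / measure M E"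
      using substitutes[OF pos] unfolding I_def condE_def .
    then have hyp: "I e1 - I e2 \<le> I (\<lambda>w. (Y w - condE M E Y)\<^sup>2) - I (\<lambda>w. (Y w - \<nu> w)\<^sup>2)"
      using pos by (simp add: diff_divide_distrib[symmetric] divide_le_cancel)
    have "I (\<lambda>w. (Y w - condE M E Y)\<^sup>2) \<le> I (\<lambda>w. (Y w - r)\<^sup>2)"
      unfolding I_def using E_M pos by (rule integral_indicator_sq_dev_condE_le)
    also have "\<dots> = I (\<lambda>w. (Y w - m w)\<^sup>2)"
      unfolding I_def using m by (intro Bochner_Integration.integral_cong) (auto simp: indicator_def)
    finally have mean: "I (\<lambda>w. (Y w - condE M E Y)\<^sup>2) \<le> I (\<lambda>w. (Y w - m w)\<^sup>2)" .
    have "I (\<lambda>w. (Y w - \<nu> w)\<^sup>2)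
        = I (\<lambda>w. (Y w - real_cond_exp M G Y w)\<^sup>2) + I (\<lambda>w. (real_cond_exp M G Y w - \<nu> w)\<^sup>2)"
      unfolding I_def using G \<nu> E by (rule integral_indicator_sq_dist_real_cond_exp)
    moreover have "0 \<le> I (\<lambda>w. (real_cond_exp M G Y w - \<nu> w)\<^sup>2)"
      unfolding I_def by simp
    ultimately show ?thesis
      using hyp mean unfolding I_def by linarith
  qed
qed

lemma error_reduction_le_of_cellwise_substitutes:
  fixes A m :: "'a \<Rightarrow> real" and \<nu> :: "real \<Rightarrow> 'a \<Rightarrow> real"
  assumes F: "subalgebra M F" and G: "subalgebra M G"
    and A [measurable]: "A \<in> borel_measurable M" and A_bound: "AE w in M. \<bar>A w\<bar> \<le> 1"
    and m_G: "m \<in> borel_measurable G" and R: "finite R" "AE w in M. m w \<in> R"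
    and \<nu>: "\<And>r. r \<in> R \<Longrightarrow> \<nu> r \<in> borel_measurable G" "\<And>r. r \<in> R \<Longrightarrow> AE w in M. \<bar>\<nu> r w\<bar> \<le> 1"
    and substitutes: "\<And>r. r \<in> R \<Longrightarrow> measure M {w \<in> space M. m w = r} > 0 \<Longrightarrow>
       condE M {w \<in> space M. m w = r} (\<lambda>w. (Y w - A w)\<^sup>2)
       - condE M {w \<in> space M. m w = r} (\<lambda>w. (Y w - real_cond_exp M F Y w)\<^sup>2)
       \<le> condE M {w \<in> space M. m w = r} (\<lambda>w. (Y w - condE M {w \<in> space M. m w = r} Y)\<^sup>2)
       - condE M {w \<in> space M. m w = r} (\<lambda>w. (Y w - \<nu> r w)\<^sup>2)"
  shows "(\<integral>w. (Y w - A w)\<^sup>2 \<partial>M) - (\<integral>w. (Y w - real_cond_exp M F Y w)\<^sup>2 \<partial>M)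
      \<le> (\<integral>w. (Y w - m w)\<^sup>2 \<partial>M) - (\<integral>w. (Y w - real_cond_exp M G Y w)\<^sup>2 \<partial>M)"
proof -
  define \<mu> where "\<mu> = real_cond_exp M F Y"
  define a where "a = real_cond_exp M G Y"
  define I where "I r f = (\<integral>w. indicator {w \<in> space M. m w = r} w * f w \<partial>M)" for r and f :: "'a \<Rightarrow> real"
  have m_M [measurable]: "m \<in> borel_measurable M"
    using measurable_from_subalg[OF G m_G] .
  have cell_G: "{w \<in> space M. m w = r} \<in> sets G" for r
  proof -
    have "{w \<in> space G. m w = r} \<in> sets G"
      using m_G by measurable
    then show ?thesis
      using G by (simp add: subalgebra_def)
  qed
  have cell: "I r (\<lambda>w. (Y w - A w)\<^sup>2) - I r (\<lambda>w. (Y w - \<mu> w)\<^sup>2)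
      \<le> I r (\<lambda>w. (Y w - m w)\<^sup>2) - I r (\<lambda>w. (Y w - a w)\<^sup>2)" if r: "r \<in> R" for r
    unfolding I_def \<mu>_def a_def using G cell_G _ \<nu>[OF r] substitutes[OF r]
    by (rule integral_indicator_error_reduction_le) simp
  have m_bound: "AE w in M. \<bar>m w\<bar> \<le> (\<Sum>r\<in>R. \<bar>r\<bar>)"
    using R(2) by eventually_elim (use R(1) in \<open>auto intro: member_le_sum[where f = abs]\<close>)
  have integrable: "integrable M (\<lambda>w. (Y w - A w)\<^sup>2)" "integrable M (\<lambda>w. (Y w - \<mu> w)\<^sup>2)"
    "integrable M (\<lambda>w. (Y w - m w)\<^sup>2)" "integrable M (\<lambda>w. (Y w - a w)\<^sup>2)"
    unfolding \<mu>_def a_def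
    using abs_Y_le_1 A_bound m_bound abs_real_cond_exp_le_1[OF F] abs_real_cond_exp_le_1[OF G]
    by (auto intro!: integrable_sq_diff_bounded)
  have cells: "(\<integral>w. f w \<partial>M) = (\<Sum>r\<in>R. I r f)" if "integrable M f" for f
    unfolding I_def using R m_M that by (rule integral_eq_sum_level_sets)
  have "(\<integral>w. (Y w - A w)\<^sup>2 \<partial>M) - (\<integral>w. (Y w - \<mu> w)\<^sup>2 \<partial>M)
      = (\<Sum>r\<in>R. I r (\<lambda>w. (Y w - A w)\<^sup>2) - I r (\<lambda>w. (Y w - \<mu> w)\<^sup>2))"
    using cells[OF integrable(1)] cells[OF integrable(2)] by (simp add: sum_subtractf)
  also have "\<dots> \<le> (\<Sum>r\<in>R. I r (\<lambda>w. (Y w - m w)\<^sup>2) - I r (\<lambda>w. (Y w - a w)\<^sup>2))"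
    using cell by (rule sum_mono)
  also have "\<dots> = (\<integral>w. (Y w - m w)\<^sup>2 \<partial>M) - (\<integral>w. (Y w - a w)\<^sup>2 \<partial>M)"
    using cells[OF integrable(3)] cells[OF integrable(4)] by (simp add: sum_subtractf)
  finally show ?thesis
    unfolding \<mu>_def a_def .
qed

lemma accuracy_after_rounded_report:
  fixes A m :: "'a \<Rightarrow> real" and \<nu> :: "real \<Rightarrow> 'a \<Rightarrow> real"
  assumes eps: "eps > 0"
    and F: "subalgebra M F" and Fo: "subalgebra M Fo" and G: "subalgebra F G"
    and m_def: "m = (\<lambda>w. round_to eps (real_cond_exp M Fo Y w))" and m_G: "m \<in> borel_measurable G"
    and A: "A \<in> borel_measurable Fo" "AE w in M. \<bar>A w\<bar> \<le> 1"
    and R: "finite R" "AE w in M. m w \<in> R"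
    and \<nu>: "\<And>r. r \<in> R \<Longrightarrow> \<nu> r \<in> borel_measurable G" "\<And>r. r \<in> R \<Longrightarrow> AE w in M. \<bar>\<nu> r w\<bar> \<le> 1"
    and substitutes: "\<And>r. r \<in> R \<Longrightarrow> measure M {w \<in> space M. m w = r} > 0 \<Longrightarrow>
       condE M {w \<in> space M. m w = r} (\<lambda>w. (Y w - A w)\<^sup>2)
       - condE M {w \<in> space M. m w = r} (\<lambda>w. (Y w - real_cond_exp M F Y w)\<^sup>2)
       \<le> condE M {w \<in> space M. m w = r} (\<lambda>w. (Y w - condE M {w \<in> space M. m w = r} Y)\<^sup>2)
       - condE M {w \<in> space M. m w = r} (\<lambda>w. (Y w - \<nu> r w)\<^sup>2)"
  shows "(\<integral>w. (real_cond_exp M F Y w - real_cond_exp M G Y w)\<^sup>2 \<partial>M) \<le> eps\<^sup>2 / 4"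
proof -
  define \<mu> where "\<mu> = real_cond_exp M F Y"
  define a where "a = real_cond_exp M G Y"
  define c where "c = real_cond_exp M Fo Y"
  have G_M: "subalgebra M G"
    using F G by (rule subalgebra_trans)
  have a_F: "a \<in> borel_measurable F"
    unfolding a_def using G by (rule measurable_from_subalg) simp
  have m_Fo: "m \<in> borel_measurable Fo"
    unfolding m_def by measurable
  have rounding: "\<bar>c w - m w\<bar> \<le> eps / 2" for w
    unfolding m_def c_def using eps by (rule abs_diff_round_to_le)
  have m_bound: "AE w in M. \<bar>m w\<bar> \<le> 1 + eps"
    using abs_real_cond_exp_le_1[OF Fo]
  proof eventually_elim
    case (elim w)
    then show ?case
      using rounding[of w] eps unfolding c_def by linarith
  qed
  have gain: "(\<integral>w. (Y w - A w)\<^sup>2 \<partial>M) - (\<integral>w. (Y w - \<mu> w)\<^sup>2 \<partial>M)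
      \<le> (\<integral>w. (Y w - m w)\<^sup>2 \<partial>M) - (\<integral>w. (Y w - a w)\<^sup>2 \<partial>M)"
    unfolding \<mu>_def a_def using F G_M measurable_from_subalg[OF Fo A(1)] A(2) m_G R \<nu> substitutes
    by (rule error_reduction_le_of_cellwise_substitutes)
  have "(\<integral>w. (Y w - A w)\<^sup>2 \<partial>M) = (\<integral>w. (Y w - c w)\<^sup>2 \<partial>M) + (\<integral>w. (c w - A w)\<^sup>2 \<partial>M)"
    unfolding c_def using Fo A by (rule integral_sq_dist_real_cond_exp)
  moreover have "(\<integral>w. (Y w - m w)\<^sup>2 \<partial>M) = (\<integral>w. (Y w - c w)\<^sup>2 \<partial>M) + (\<integral>w. (c w - m w)\<^sup>2 \<partial>M)"
    unfolding c_def using Fo m_Fo m_bound by (rule integral_sq_dist_real_cond_exp)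
  moreover have "(\<integral>w. (Y w - a w)\<^sup>2 \<partial>M) = (\<integral>w. (Y w - \<mu> w)\<^sup>2 \<partial>M) + (\<integral>w. (\<mu> w - a w)\<^sup>2 \<partial>M)"
    unfolding \<mu>_def using F a_F abs_real_cond_exp_le_1[OF G_M] unfolding a_def
    by (rule integral_sq_dist_real_cond_exp)
  moreover have "(\<integral>w. (c w - m w)\<^sup>2 \<partial>M) \<le> (eps / 2)\<^sup>2"
    using rounding measurable_from_subalg[OF Fo m_Fo] unfolding c_def
    by (intro integral_sq_le_of_abs_le) auto
  moreover have "(eps / 2)\<^sup>2 = eps\<^sup>2 / 4"
    by (simp add: power_divide)
  moreover have "0 \<le> (\<integral>w. (c w - A w)\<^sup>2 \<partial>M)"
    by simp
  ultimately show ?thesis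
    using gain unfolding \<mu>_def a_def by linarith
qed

end

section \<open>The protocol\<close>

lemma unit_observable_info_structure:
  assumes "info_structure M SS TT sig tau Y"
  shows "unit_observable M Y"
  using assms unfolding info_structure_def unit_observable_def unit_observable_axioms_def by auto

lemma info_structure_signals:
  assumes "info_structure M SS TT sig tau Y"
  shows "sig \<in> M \<rightarrow>\<^sub>M SS" "tau \<in> M \<rightarrow>\<^sub>M TT" "sig \<in> space M \<rightarrow> space SS" "tau \<in> space M \<rightarrow> space TT"
  using assms by (auto simp: info_structure_def measurable_def)

lemma info_structure_swap:
  "info_structure M SS TT sig tau Y \<Longrightarrow> info_structure M TT SS tau sig Y"
  by (auto simp: info_structure_def)

lemma mu_st_swap:
  assumes "info_structure M SS TT sig tau Y"
  shows "mu_st M TT SS tau sig Y = mu_st M SS TT sig tau Y"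
  using gen2_swap[OF info_structure_signals(3,4)[OF assms]] by (simp add: mu_st_def)

lemma rectangle_substitutes_swap:
  assumes info: "info_structure M SS TT sig tau Y" and subst: "rectangle_substitutes M SS TT sig tau Y"
  shows "rectangle_substitutes M TT SS tau sig Y"
proof -
  note sig = info_structure_signals(3)[OF info] and tau = info_structure_signals(4)[OF info]
  have rect_swap: "rect_event M tau sig T S = rect_event M sig tau S T" for S T
    by (auto simp: rect_event_def)
  have swap: "mu_ST M tau sig Y T S = mu_ST M sig tau Y S T"
    "mu_st M TT SS tau sig Y = mu_st M SS TT sig tau Y"
    "mu_St M SS tau sig Y T = mu_sT M SS sig tau Y T"
    "mu_sT M TT tau sig Y S = mu_St M TT sig tau Y S" for S T
    using mu_st_swap[OF info] gen2_swap[of "\<lambda>w. sig w \<in> S" M "count_space UNIV", OF _ tau]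
      gen2_swap[OF sig, of "\<lambda>w. tau w \<in> T" "count_space UNIV"]
    by (simp_all add: rect_swap mu_ST_def mu_St_def mu_sT_def)
  show ?thesis
    unfolding rectangle_substitutes_def Let_def rect_swap swap
  proof (intro ballI impI)
    fix T S
    let ?E = "rect_event M sig tau S T"
    assume "T \<in> sets TT" "S \<in> sets SS" "0 < measure M ?E"
    then have "condE M ?E (\<lambda>w. (Y w - mu_St M TT sig tau Y S w)\<^sup>2)
        - condE M ?E (\<lambda>w. (Y w - mu_st M SS TT sig tau Y w)\<^sup>2)
      \<le> condE M ?E (\<lambda>w. (Y w - mu_ST M sig tau Y S T)\<^sup>2)
        - condE M ?E (\<lambda>w. (Y w - mu_sT M SS sig tau Y T w)\<^sup>2)"
      using subst unfolding rectangle_substitutes_def Let_def by blast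
    then show "condE M ?E (\<lambda>w. (Y w - mu_sT M SS sig tau Y T w)\<^sup>2)
        - condE M ?E (\<lambda>w. (Y w - mu_st M SS TT sig tau Y w)\<^sup>2)
      \<le> condE M ?E (\<lambda>w. (Y w - mu_ST M sig tau Y S T)\<^sup>2)
        - condE M ?E (\<lambda>w. (Y w - mu_St M TT sig tau Y S w)\<^sup>2)"
      by linarith
  qed
qed

lemma final_b_eq_final_a_swap:
  assumes "info_structure M SS TT sig tau Y"
  shows "final_b M SS TT sig tau Y eps = final_a M TT SS tau sig Y eps"
  using gen2_swap[of "msgA M SS sig Y eps" M borel tau TT] info_structure_signals(4)[OF assms]
  by (simp add: final_a_def final_b_def msgA_def msgB_def mu_s_def mu_t_def)

lemma rectangle_substitutes_tau_event:
  assumes subst: "rectangle_substitutes M SS TT sig tau Y" and sig: "sig \<in> space M \<rightarrow> space SS"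
    and T: "T \<in> sets TT" and E: "E = {w \<in> space M. tau w \<in> T}" and pos: "measure M E > 0"
  shows "condE M E (\<lambda>w. (Y w - mu_St M TT sig tau Y (space SS) w)\<^sup>2)
      - condE M E (\<lambda>w. (Y w - mu_st M SS TT sig tau Y w)\<^sup>2)
    \<le> condE M E (\<lambda>w. (Y w - condE M E Y)\<^sup>2) - condE M E (\<lambda>w. (Y w - mu_sT M SS sig tau Y T w)\<^sup>2)"
proof -
  have rect: "rect_event M sig tau (space SS) T = E"
    using sig by (auto simp: rect_event_def E)
  then have "let E = rect_event M sig tau (space SS) T in
      condE M E (\<lambda>w. (Y w - mu_St M TT sig tau Y (space SS) w)\<^sup>2)
        - condE M E (\<lambda>w. (Y w - mu_st M SS TT sig tau Y w)\<^sup>2)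
      \<le> condE M E (\<lambda>w. (Y w - mu_ST M sig tau Y (space SS) T)\<^sup>2)
        - condE M E (\<lambda>w. (Y w - mu_sT M SS sig tau Y T w)\<^sup>2)"
    using subst T pos unfolding rectangle_substitutes_def by blast
  then show ?thesis
    unfolding Let_def rect mu_ST_def .
qed

lemma final_a_accuracy:
  assumes info: "info_structure M SS TT sig tau Y" and subst: "rectangle_substitutes M SS TT sig tau Y"
    and eps: "eps > 0"
  shows "(\<integral>w. (mu_st M SS TT sig tau Y w - final_a M SS TT sig tau Y eps w)\<^sup>2 \<partial>M) \<le> eps\<^sup>2 / 4"
proof -
  interpret unit_observable M Y
    using info by (rule unit_observable_info_structure)
  note sig_M = info_structure_signals(1)[OF info] and tau_M = info_structure_signals(2)[OF info]
    and sig_space = info_structure_signals(3)[OF info] and tau_space = info_structure_signals(4)[OF info]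
  define F where "F = gen2 M sig SS tau TT"
  define Ft where "Ft = gen1 M tau TT"
  define m where "m = msgB M TT tau Y eps"
  define G where "G = gen2 M sig SS m borel"
  have F: "subalgebra M F"
    unfolding F_def using sig_M tau_M by (rule subalgebra_gen2) simp
  have Ft: "subalgebra M Ft"
    unfolding Ft_def using tau_M by (rule subalgebra_gen1) simp
  have m_eq: "m = (\<lambda>w. round_to eps (real_cond_exp M Ft Y w))"
    unfolding m_def msgB_def mu_t_def Ft_def ..
  have m_Ft: "m \<in> borel_measurable Ft"
    unfolding m_eq by measurable
  have tau_F: "tau \<in> F \<rightarrow>\<^sub>M TT" and sig_F: "sig \<in> F \<rightarrow>\<^sub>M SS"
    unfolding F_def using measurable_gen2[OF sig_space tau_space] by simp_all
  have "subalgebra F Ft"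
    unfolding Ft_def using tau_F by (rule subalgebra_gen1) (simp add: F_def gen2_def)
  then have G: "subalgebra F G"
    unfolding G_def using sig_F measurable_from_subalg[OF _ m_Ft]
    by (intro subalgebra_gen2) (auto simp: F_def gen2_def)
  have sig_G: "sig \<in> G \<rightarrow>\<^sub>M SS" and m_G: "m \<in> borel_measurable G"
    unfolding G_def using measurable_gen2[OF sig_space, of m borel] by simp_all
  \<comment> \<open>With S the whole signal space, mu_St is the conditional expectation given tau alone.\<close>
  define A where "A = mu_St M TT sig tau Y (space SS)"
  have A_algebra: "subalgebra Ft (gen2 M (\<lambda>w. sig w \<in> space SS) (count_space UNIV) tau TT)"
    unfolding Ft_def using sig_space tau_space by (rule subalgebra_gen2_whole_space)
  have A_Ft: "A \<in> borel_measurable Ft" and A_bound: "AE w in M. \<bar>A w\<bar> \<le> 1"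
    unfolding A_def mu_St_def using measurable_from_subalg[OF A_algebra borel_measurable_cond_exp]
      abs_real_cond_exp_le_1[OF subalgebra_trans[OF Ft A_algebra]] by simp_all
  obtain T where T: "\<And>r. T r \<in> sets TT" "\<And>r. {w \<in> space M. m w = r} = tau -` T r \<inter> space M"
    using level_set_gen1[OF m_Ft[unfolded Ft_def] tau_space] by metis
  define \<nu> where "\<nu> r = mu_sT M SS sig tau Y (T r)" for r
  have \<nu>_algebra: "subalgebra G (gen2 M sig SS (\<lambda>w. tau w \<in> T r) (count_space UNIV))" for r
    using sig_G m_G _ T(2) by (rule subalgebra_gen2_level_set) (simp add: G_def gen2_def)
  have \<nu>_G: "\<nu> r \<in> borel_measurable G" and \<nu>_bound: "AE w in M. \<bar>\<nu> r w\<bar> \<le> 1" for r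
    unfolding \<nu>_def mu_sT_def using measurable_from_subalg[OF \<nu>_algebra borel_measurable_cond_exp]
      abs_real_cond_exp_le_1[OF subalgebra_trans[OF subalgebra_trans[OF F G] \<nu>_algebra]] by simp_all
  have level_set: "{w \<in> space M. m w = r} = {w \<in> space M. tau w \<in> T r}" for r
    using T(2)[of r] by auto
  have substitutes: "condE M {w \<in> space M. m w = r} (\<lambda>w. (Y w - A w)\<^sup>2)
       - condE M {w \<in> space M. m w = r} (\<lambda>w. (Y w - real_cond_exp M F Y w)\<^sup>2)
       \<le> condE M {w \<in> space M. m w = r} (\<lambda>w. (Y w - condE M {w \<in> space M. m w = r} Y)\<^sup>2)
       - condE M {w \<in> space M. m w = r} (\<lambda>w. (Y w - \<nu> r w)\<^sup>2)"
    if "measure M {w \<in> space M. m w = r} > 0" for r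
    using rectangle_substitutes_tau_event[OF subst sig_space T(1) level_set that]
    unfolding A_def \<nu>_def F_def mu_st_def .
  have m_grid: "AE w in M. m w \<in> report_grid eps"
    unfolding m_eq using Ft eps by (rule round_to_real_cond_exp_in_report_grid)
  have "(\<integral>w. (real_cond_exp M F Y w - real_cond_exp M G Y w)\<^sup>2 \<partial>M) \<le> eps\<^sup>2 / 4"
    using eps F Ft G m_eq m_G A_Ft A_bound finite_report_grid m_grid \<nu>_G \<nu>_bound substitutes
    by (rule accuracy_after_rounded_report)
  then show ?thesis
    by (simp add: mu_st_def final_a_def F_def G_def m_def)
qed

lemma abs_mu_st_le_1:
  assumes "info_structure M SS TT sig tau Y"
  shows "AE w in M. \<bar>mu_st M SS TT sig tau Y w\<bar> \<le> 1"
proof -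
  interpret unit_observable M Y
    using assms by (rule unit_observable_info_structure)
  have "subalgebra M (gen2 M sig SS tau TT)"
    using info_structure_signals(1,2)[OF assms] by (rule subalgebra_gen2) simp
  then show ?thesis
    unfolding mu_st_def by (rule abs_real_cond_exp_le_1)
qed

lemma abs_final_a_le_1:
  assumes "info_structure M SS TT sig tau Y"
  shows "AE w in M. \<bar>final_a M SS TT sig tau Y eps w\<bar> \<le> 1"
proof -
  interpret unit_observable M Y
    using assms by (rule unit_observable_info_structure)
  have "msgB M TT tau Y eps \<in> borel_measurable M"
    unfolding msgB_def mu_t_def by measurable
  then have "subalgebra M (gen2 M sig SS (msgB M TT tau Y eps) borel)"
    using info_structure_signals(1)[OF assms] by (intro subalgebra_gen2) simp_all
  then show ?thesis
    unfolding final_a_def by (rule abs_real_cond_exp_le_1)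
qed

lemma msgA_in_report_grid:
  assumes "info_structure M SS TT sig tau Y" "eps > 0"
  shows "AE w in M. msgA M SS sig Y eps w \<in> report_grid eps"
proof -
  interpret unit_observable M Y
    using assms(1) by (rule unit_observable_info_structure)
  have "subalgebra M (gen1 M sig SS)"
    using info_structure_signals(1)[OF assms(1)] by (rule subalgebra_gen1) simp
  then show ?thesis
    unfolding msgA_def mu_s_def using assms(2) by (rule round_to_real_cond_exp_in_report_grid)
qed

lemma msgB_eq_msgA: "msgB M TT tau Y eps = msgA M TT tau Y eps"
  by (simp add: msgA_def msgB_def mu_s_def mu_t_def)

theorem propositionB1:
  fixes M :: "'w measure" and SS :: "'s measure" and TT :: "'t measure"
    and sig :: "'w \<Rightarrow> 's" and tau :: "'w \<Rightarrow> 't" and Y :: "'w \<Rightarrow> real" and eps :: real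
  assumes "info_structure M SS TT sig tau Y"
    and "rectangle_substitutes M SS TT sig tau Y"
    and "eps > 0"
  shows
    "(\<exists>RA RB. finite RA \<and> finite RB
        \<and> real (card RA) \<le> 1 / eps + 2 \<and> real (card RB) \<le> 1 / eps + 2
        \<and> (AE w in M. msgA M SS sig Y eps w \<in> RA \<and> msgB M TT tau Y eps w \<in> RB)
        \<and> real_of_int (\<lceil>log 2 (real (card RA))\<rceil> + \<lceil>log 2 (real (card RB))\<rceil>)
            \<le> 2 * log 2 (1 / eps + 2) + 2)
     \<and> (1/4) * (\<integral>w. (final_a M SS TT sig tau Y eps w - final_b M SS TT sig tau Y eps w)\<^sup>2 \<partial>M)
         \<le> 2 * eps\<^sup>2
     \<and> (\<integral>w. (mu_st M SS TT sig tau Y w - final_a M SS TT sig tau Y eps w)\<^sup>2 \<partial>M) \<le> eps\<^sup>2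
     \<and> (\<integral>w. (mu_st M SS TT sig tau Y w - final_b M SS TT sig tau Y eps w)\<^sup>2 \<partial>M) \<le> eps\<^sup>2"
proof -
  note swapped = info_structure_swap[OF assms(1)] rectangle_substitutes_swap[OF assms(1,2)]
  interpret prob_space M
    using assms(1) by (simp add: info_structure_def)
  have alice: "(\<integral>w. (mu_st M SS TT sig tau Y w - final_a M SS TT sig tau Y eps w)\<^sup>2 \<partial>M) \<le> eps\<^sup>2 / 4"
    using assms by (rule final_a_accuracy)
  have bob: "(\<integral>w. (mu_st M SS TT sig tau Y w - final_b M SS TT sig tau Y eps w)\<^sup>2 \<partial>M) \<le> eps\<^sup>2 / 4"
    using final_a_accuracy[OF swapped assms(3)]
    unfolding final_b_eq_final_a_swap[OF assms(1)] mu_st_swap[OF assms(1)] .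
  have "(\<integral>w. (final_a M SS TT sig tau Y eps w - final_b M SS TT sig tau Y eps w)\<^sup>2 \<partial>M)
      \<le> 2 * (\<integral>w. (mu_st M SS TT sig tau Y w - final_a M SS TT sig tau Y eps w)\<^sup>2 \<partial>M)
        + 2 * (\<integral>w. (mu_st M SS TT sig tau Y w - final_b M SS TT sig tau Y eps w)\<^sup>2 \<partial>M)"
    using abs_final_a_le_1[OF assms(1)] abs_final_a_le_1[OF swapped(1)] abs_mu_st_le_1[OF assms(1)]
    unfolding final_b_eq_final_a_swap[OF assms(1)]
    by (intro integral_sq_diff_le_two_sum) (simp_all add: final_a_def mu_st_def)
  with alice bob have agreement:
    "(1/4) * (\<integral>w. (final_a M SS TT sig tau Y eps w - final_b M SS TT sig tau Y eps w)\<^sup>2 \<partial>M) \<le> 2 * eps\<^sup>2"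
    using zero_le_power2[of eps] by linarith
  have "AE w in M. msgA M SS sig Y eps w \<in> report_grid eps \<and> msgB M TT tau Y eps w \<in> report_grid eps"
    using msgA_in_report_grid[OF assms(1,3)] msgA_in_report_grid[OF swapped(1) assms(3)]
    unfolding msgB_eq_msgA by eventually_elim simp
  then have communication: "\<exists>RA RB. finite RA \<and> finite RB
        \<and> real (card RA) \<le> 1 / eps + 2 \<and> real (card RB) \<le> 1 / eps + 2
        \<and> (AE w in M. msgA M SS sig Y eps w \<in> RA \<and> msgB M TT tau Y eps w \<in> RB)
        \<and> real_of_int (\<lceil>log 2 (real (card RA))\<rceil> + \<lceil>log 2 (real (card RB))\<rceil>)
            \<le> 2 * log 2 (1 / eps + 2) + 2"
    using card_report_grid[OF assms(3)] ceiling_log_card_report_grid[OF assms(3)]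
    by (intro exI[of _ "report_grid eps"]) auto
  show ?thesis
    using alice bob zero_le_power2[of eps] by (intro conjI communication agreement) linarith+
qed

end
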